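(* Let $N=\{1,\ldots,n\}$ and $\mathcal{X}=\{-1,1\}^n$. A deterministic voting rule $\phi:\mathcal{X}\to\{-1,1\}$ is weakly robust and anonymous if and only if it is an anonymous simple majority rule, i.e. a rule satisfying $\phi(x)=1$ whenever $\sum_ix_i>0$ and $\phi(x)=-1$ whenever $\sum_ix_i<0$, whose values on ties $\sum_ix_i=0$ are such that $\phi$ is anonymous.
   Context: $\phi$ is anonymous if $\phi(x)=\phi((x_{\pi(i)})_{i\in N})$ for all $x$ and all permutations $\pi$ of $N$. Responsiveness: $r_i(\phi,p)=p(\{x:\phi(x)=x_i\})$ for $p\in\Delta(\mathcal{X})$ (probability distributions on $\mathcal{X}$). $\phi$ is weakly robust if for every $p\in\Delta(\mathcal{X})$ there is some $i\in N$ with $r_i(\phi,p)\geq1/2$. *)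

theory Defs
  imports Complex_Main
begin

text \<open>Voters are the elements of a finite type 'n (so N has n = CARD('n) elements).
  Profiles x \<in> X = {-1,1}^N are functions 'n \<Rightarrow> int with values in {-1,1}.\<close>

definition profiles :: "('n::finite \<Rightarrow> int) set" where
  "profiles = {x. \<forall>i. x i \<in> {-1, 1}}"

definition is_rule :: "(('n::finite \<Rightarrow> int) \<Rightarrow> int) \<Rightarrow> bool" where
  "is_rule \<phi> \<longleftrightarrow> (\<forall>x\<in>profiles. \<phi> x \<in> {-1, 1})"

definition anonymous :: "(('n::finite \<Rightarrow> int) \<Rightarrow> int) \<Rightarrow> bool" where
  "anonymous \<phi> \<longleftrightarrow>
     (\<forall>x\<in>profiles. \<forall>\<pi>. bij \<pi> \<longrightarrow> \<phi> x = \<phi> (\<lambda>i. x (\<pi> i)))"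

definition distributions :: "(('n::finite \<Rightarrow> int) \<Rightarrow> real) set" where
  "distributions = {p. (\<forall>x\<in>profiles. p x \<ge> 0) \<and> (\<Sum>x\<in>profiles. p x) = 1}"

definition responsiveness ::
  "(('n::finite \<Rightarrow> int) \<Rightarrow> int) \<Rightarrow> (('n \<Rightarrow> int) \<Rightarrow> real) \<Rightarrow> 'n \<Rightarrow> real" where
  "responsiveness \<phi> p i = (\<Sum>x\<in>{x\<in>profiles. \<phi> x = x i}. p x)"

definition weakly_robust :: "(('n::finite \<Rightarrow> int) \<Rightarrow> int) \<Rightarrow> bool" where
  "weakly_robust \<phi> \<longleftrightarrow>
     (\<forall>p\<in>distributions. \<exists>i. responsiveness \<phi> p i \<ge> 1/2)"

definition simple_majority :: "(('n::finite \<Rightarrow> int) \<Rightarrow> int) \<Rightarrow> bool" where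
  "simple_majority \<phi> \<longleftrightarrow>
     (\<forall>x\<in>profiles. ((\<Sum>i\<in>UNIV. x i) > 0 \<longrightarrow> \<phi> x = 1) \<and>
                   ((\<Sum>i\<in>UNIV. x i) < 0 \<longrightarrow> \<phi> x = -1))"

end

theory Submission
  imports Defs "HOL-Library.Cardinality" "HOL-Combinatorics.Transposition"
begin

text \<open>Summing the responsiveness over all voters gives the expected number of voters who agree
  with the outcome. A simple majority rule agrees with at least n/2 voters at every profile, so
  this sum is at least n/2 and some voter has responsiveness at least 1/2. Conversely, suppose an
  anonymous rule agrees with only k < n/2 voters at some profile x. Under the uniform
  distribution on the permutations of x the rule is constant by anonymity and all voters play
  symmetric roles, so every voter has the same responsiveness k/n < 1/2.\<close>

lemma finite_profiles: "finite (profiles :: ('n::finite \<Rightarrow> int) set)"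
proof (rule finite_surj)
  show "profiles \<subseteq> range (\<lambda>s (i::'n). if s i then 1 else - 1 :: int)"
  proof
    fix x :: "'n \<Rightarrow> int" assume "x \<in> profiles"
    then show "x \<in> range (\<lambda>s i. if s i then 1 else - 1)"
      by (intro range_eqI[of _ _ "\<lambda>i. x i = 1"]) (auto simp: profiles_def fun_eq_iff)
  qed
qed simp

lemma vote_times_sum_profile:
  fixes x :: "'n::finite \<Rightarrow> int"
  assumes "x \<in> profiles" and "v \<in> {-1, 1}"
  shows "v * (\<Sum>i\<in>UNIV. x i) = 2 * int (card {i. x i = v}) - int CARD('n)"
proof -
  have "v * (\<Sum>i\<in>UNIV. x i) = (\<Sum>i\<in>UNIV. if x i = v then 1 else -1)"
    using assms unfolding sum_distrib_left by (intro sum.cong) (auto simp: profiles_def)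
  also have "\<dots> = int (card {i. x i = v}) - int (card (UNIV - {i. x i = v}))"
    by (simp add: sum.If_cases Compl_eq_Diff_UNIV)
  also have "\<dots> = 2 * int (card {i. x i = v}) - int CARD('n)"
    by (simp add: card_Diff_subset of_nat_diff card_mono)
  finally show ?thesis .
qed

lemma simple_majority_iff_half_agree:
  fixes \<phi> :: "('n::finite \<Rightarrow> int) \<Rightarrow> int"
  assumes "is_rule \<phi>"
  shows "simple_majority \<phi> \<longleftrightarrow> (\<forall>x\<in>profiles. CARD('n) \<le> 2 * card {i. x i = \<phi> x})"
  unfolding simple_majority_def
proof (intro ball_cong refl)
  fix x :: "'n \<Rightarrow> int" assume x: "x \<in> profiles"
  have vote: "\<phi> x \<in> {-1, 1}" using assms x by (auto simp: is_rule_def)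
  have "(0 < sum x UNIV \<longrightarrow> \<phi> x = 1) \<and> (sum x UNIV < 0 \<longrightarrow> \<phi> x = -1) \<longleftrightarrow> 0 \<le> \<phi> x * sum x UNIV"
    using vote by (auto simp: zero_le_mult_iff)
  also have "\<dots> \<longleftrightarrow> CARD('n) \<le> 2 * card {i. x i = \<phi> x}"
    using vote_times_sum_profile[OF x vote] by linarith
  finally show "(0 < (\<Sum>i\<in>UNIV. x i) \<longrightarrow> \<phi> x = 1) \<and> ((\<Sum>i\<in>UNIV. x i) < 0 \<longrightarrow> \<phi> x = -1)
      \<longleftrightarrow> CARD('n) \<le> 2 * card {i. x i = \<phi> x}" by simp
qed

definition profile_orbit :: "('n \<Rightarrow> 'a) \<Rightarrow> ('n \<Rightarrow> 'a) set" where
  "profile_orbit x = {x \<circ> \<pi> |\<pi>. bij \<pi>}"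

lemma profile_orbit_self: "x \<in> profile_orbit x"
  unfolding profile_orbit_def by (metis (mono_tags) bij_id comp_id mem_Collect_eq)

lemma profile_orbit_comp_bij:
  assumes "y \<in> profile_orbit x" and "bij \<sigma>"
  shows "y \<circ> \<sigma> \<in> profile_orbit x"
  using assms unfolding profile_orbit_def by (auto simp: comp_assoc intro: bij_comp)

lemma finite_profile_orbit: "finite (profile_orbit (x :: 'n::finite \<Rightarrow> 'a))"
proof -
  have "profile_orbit x = (\<lambda>\<pi>. x \<circ> \<pi>) ` {\<pi>. bij \<pi>}"
    by (auto simp: profile_orbit_def)
  then show ?thesis by simp
qed

lemma profile_orbit_subset_profiles: "x \<in> profiles \<Longrightarrow> profile_orbit x \<subseteq> profiles"
  by (auto simp: profile_orbit_def profiles_def)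

lemma anonymous_const_on_profile_orbit:
  assumes "anonymous \<phi>" and "x \<in> profiles" and "y \<in> profile_orbit x"
  shows "\<phi> y = \<phi> x"
  using assms by (auto simp: profile_orbit_def anonymous_def comp_def)

lemma card_supporters_profile_orbit:
  fixes x :: "'n::finite \<Rightarrow> 'a"
  assumes "y \<in> profile_orbit x"
  shows "card {i. y i = v} = card {i. x i = v}"
proof -
  obtain \<pi> where "bij \<pi>" and "y = x \<circ> \<pi>"
    using assms by (auto simp: profile_orbit_def)
  then have "{i. y i = v} = \<pi> -` {i. x i = v}" by auto
  also have "card \<dots> = card {i. x i = v}"
    using \<open>bij \<pi>\<close> by (intro card_vimage_inj) (auto simp: bij_is_inj bij_is_surj)
  finally show ?thesis .
qed

lemma card_profile_orbit_coordinate_eq: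
  "card {y \<in> profile_orbit x. y i = v} = card {y \<in> profile_orbit x. y j = v}"
proof (rule bij_betw_same_card)
  let ?\<tau> = "transpose i j"
  show "bij_betw (\<lambda>y. y \<circ> ?\<tau>) {y \<in> profile_orbit x. y i = v} {y \<in> profile_orbit x. y j = v}"
    by (rule bij_betw_byWitness[where f' = "\<lambda>y. y \<circ> ?\<tau>"])
      (auto simp: comp_assoc profile_orbit_comp_bij)
qed

lemma card_profile_orbit_coordinate:
  fixes x :: "'n::finite \<Rightarrow> 'a"
  shows "CARD('n) * card {y \<in> profile_orbit x. y i = v} = card (profile_orbit x) * card {j. x j = v}"
proof -
  let ?O = "profile_orbit x"
  have "CARD('n) * card {y \<in> ?O. y i = v} = (\<Sum>j\<in>(UNIV :: 'n set). card {y \<in> ?O. y i = v})"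
    by simp
  also have "\<dots> = (\<Sum>j\<in>UNIV. card {y \<in> ?O. y j = v})"
    by (intro sum.cong refl card_profile_orbit_coordinate_eq)
  also have "\<dots> = (\<Sum>y\<in>?O. card {j. y j = v})"
    using sum.swap_restrict[of UNIV ?O "\<lambda>_ _. 1::nat" "\<lambda>j y. y j = v"]
    by (simp add: finite_profile_orbit)
  also have "\<dots> = (\<Sum>y\<in>?O. card {j. x j = v})"
    by (intro sum.cong refl card_supporters_profile_orbit)
  also have "\<dots> = card ?O * card {j. x j = v}"
    by simp
  finally show ?thesis .
qed

definition uniform_on :: "'a set \<Rightarrow> 'a \<Rightarrow> real" where
  "uniform_on A y = (if y \<in> A then 1 / real (card A) else 0)"

lemma uniform_on_in_distributions:
  assumes "A \<subseteq> profiles" and "A \<noteq> {}"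
  shows "uniform_on A \<in> distributions"
proof -
  have "finite A" using assms(1) finite_profiles finite_subset by blast
  have "(\<Sum>y\<in>profiles. uniform_on A y) = (\<Sum>y\<in>profiles \<inter> A. 1 / real (card A))"
    unfolding uniform_on_def by (rule sum.inter_restrict[OF finite_profiles, symmetric])
  also have "profiles \<inter> A = A" using assms(1) by blast
  also have "(\<Sum>y\<in>A. 1 / real (card A)) = 1" using \<open>finite A\<close> assms(2) by simp
  finally show ?thesis by (auto simp: distributions_def uniform_on_def)
qed

lemma responsiveness_uniform_on:
  assumes "A \<subseteq> profiles"
  shows "responsiveness \<phi> (uniform_on A) i = real (card {y \<in> A. \<phi> y = y i}) / real (card A)"
proof -
  have "{y \<in> profiles. \<phi> y = y i} \<inter> {y. y \<in> A} = {y \<in> A. \<phi> y = y i}"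
    using assms by auto
  then show ?thesis
    unfolding responsiveness_def uniform_on_def by (simp add: sum.If_cases finite_profiles)
qed

lemma sum_responsiveness:
  "(\<Sum>i\<in>UNIV. responsiveness \<phi> p i) = (\<Sum>x\<in>profiles. p x * real (card {i. x i = \<phi> x}))"
proof -
  have "(\<Sum>i\<in>UNIV. responsiveness \<phi> p i) = (\<Sum>i\<in>UNIV. \<Sum>x\<in>{x \<in> profiles. x i = \<phi> x}. p x)"
    unfolding responsiveness_def by (simp add: eq_commute)
  also have "\<dots> = (\<Sum>x\<in>profiles. \<Sum>i\<in>{i \<in> UNIV. x i = \<phi> x}. p x)"
    by (rule sum.swap_restrict) (simp_all add: finite_profiles)
  finally show ?thesis by (simp add: mult.commute)
qed

lemma weakly_robust_if_half_agree:
  fixes \<phi> :: "('n::finite \<Rightarrow> int) \<Rightarrow> int"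
  assumes half: "\<forall>x\<in>profiles. CARD('n) \<le> 2 * card {i. x i = \<phi> x}"
  shows "weakly_robust \<phi>"
  unfolding weakly_robust_def
proof (intro ballI)
  fix p :: "('n \<Rightarrow> int) \<Rightarrow> real" assume p: "p \<in> distributions"
  have "(\<Sum>i\<in>(UNIV :: 'n set). 1 / 2) = (\<Sum>x\<in>profiles. p x * (real CARD('n) / 2))"
    using p unfolding sum_distrib_right[symmetric] by (simp add: distributions_def)
  also have "\<dots> \<le> (\<Sum>x\<in>profiles. p x * real (card {i. x i = \<phi> x}))"
    using p half by (intro sum_mono mult_left_mono) (auto simp: distributions_def)
  also have "\<dots> = (\<Sum>i\<in>UNIV. responsiveness \<phi> p i)"
    by (rule sum_responsiveness[symmetric])
  finally show "\<exists>i. 1 / 2 \<le> responsiveness \<phi> p i"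
    by (meson not_le sum_strict_mono finite UNIV_not_empty)
qed

lemma half_agree_if_anonymous_weakly_robust:
  fixes \<phi> :: "('n::finite \<Rightarrow> int) \<Rightarrow> int"
  assumes anon: "anonymous \<phi>" and robust: "weakly_robust \<phi>" and x: "x \<in> profiles"
  shows "CARD('n) \<le> 2 * card {i. x i = \<phi> x}"
proof -
  let ?O = "profile_orbit x"
  have O_profiles: "?O \<subseteq> profiles" using x by (rule profile_orbit_subset_profiles)
  have O_pos: "0 < card ?O"
    using profile_orbit_self finite_profile_orbit card_gt_0_iff by blast
  obtain i where "1 / 2 \<le> responsiveness \<phi> (uniform_on ?O) i"
    using robust uniform_on_in_distributions[OF O_profiles] profile_orbit_self
    unfolding weakly_robust_def by blast
  moreover have "{y \<in> ?O. \<phi> y = y i} = {y \<in> ?O. y i = \<phi> x}"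
    using anonymous_const_on_profile_orbit[OF anon x] by auto
  ultimately have "card ?O \<le> 2 * card {y \<in> ?O. y i = \<phi> x}"
    using O_pos by (simp add: responsiveness_uniform_on[OF O_profiles] field_simps)
  then have "CARD('n) * card ?O \<le> CARD('n) * (2 * card {y \<in> ?O. y i = \<phi> x})"
    by (rule mult_le_mono2)
  also have "\<dots> = 2 * (CARD('n) * card {y \<in> ?O. y i = \<phi> x})"
    by simp
  also have "\<dots> = 2 * card {j. x j = \<phi> x} * card ?O"
    by (simp add: card_profile_orbit_coordinate)
  finally show ?thesis using O_pos by simp
qed

theorem corollary3:
  fixes \<phi> :: "('n::finite \<Rightarrow> int) \<Rightarrow> int"
  assumes "is_rule \<phi>"
  shows "(weakly_robust \<phi> \<and> anonymous \<phi>) \<longleftrightarrow> (simple_majority \<phi> \<and> anonymous \<phi>)"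
  using simple_majority_iff_half_agree[OF assms] weakly_robust_if_half_agree
    half_agree_if_anonymous_weakly_robust by blast

end
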